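(* Let $N\ge2$. The action of the braid-cyclic group $BC_N$ on the set of trees with $N$ edges labelled $0,1,\dots,N-1$ (described in the context) is transitive.
   Context: Trees have $N$ edges labelled bijectively by $0,\dots,N-1$ and are considered up to label-preserving isomorphism. $BC_N$ is the subgroup of $\mathrm{Aut}(F(s_0,\dots,s_{N-1}))$ generated by $\lambda$ and $u_1,\dots,u_{N-1}$ with $\lambda(s_k)=s_{k+1}$ (indices mod $N$), $u_k(s_{k-1})=s_k$, $u_k(s_k)=s_k^{-1}s_{k-1}s_k$, $u_k(s_l)=s_l$ for $l\neq k-1,k$. It acts on labelled trees as follows: $u_k$ affects only the edges labelled $k-1$ and $k$; if they have no common vertex they exchange labels; if the edge labelled $k-1$ is $AB$ and the edge labelled $k$ is $AC$, then $AB$ receives label $k$, $AC$ is erased, and a new edge $BC$ labelled $k-1$ is drawn. $\lambda$ leaves the tree unchanged and shifts labels $i\mapsto i+1\pmod N$. *)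

theory Defs
  imports Main
begin

text \<open>A labelled tree with N edges is represented with vertex set {0..N};
  t k is the (two-element) set of endpoints of the edge labelled k, for k < N.
  Values t k for k >= N are irrelevant.\<close>

type_synonym ltree = "nat \<Rightarrow> nat set"

definition tree_adj :: "nat \<Rightarrow> ltree \<Rightarrow> nat \<Rightarrow> nat \<Rightarrow> bool" where
  "tree_adj N t x y \<longleftrightarrow> (\<exists>k<N. t k = {x, y})"

text \<open>N edges on N+1 vertices forming a connected graph = a tree.\<close>
definition is_ltree :: "nat \<Rightarrow> ltree \<Rightarrow> bool" where
  "is_ltree N t \<longleftrightarrow>
     (\<forall>k<N. \<exists>a b. a \<noteq> b \<and> a \<le> N \<and> b \<le> N \<and> t k = {a, b}) \<and>
     (\<forall>x\<le>N. \<forall>y\<le>N. (tree_adj N t)\<^sup>*\<^sup>* x y)"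

definition ltree_iso :: "nat \<Rightarrow> ltree \<Rightarrow> ltree \<Rightarrow> bool" where
  "ltree_iso N t t' \<longleftrightarrow>
     (\<exists>f. bij_betw f {0..N} {0..N} \<and> (\<forall>k<N. t' k = f ` t k))"

definition u_move :: "nat \<Rightarrow> ltree \<Rightarrow> ltree" where
  "u_move k t =
     (let P = t (k - 1); Q = t k in
      if P \<inter> Q = {} then t(k - 1 := Q, k := P)
      else (let A = the_elem (P \<inter> Q); B = the_elem (P - {A}); C = the_elem (Q - {A})
            in t(k := P, k - 1 := {B, C})))"

text \<open>Action of lambda: label i becomes i+1 mod N.\<close>
definition lambda_move :: "nat \<Rightarrow> ltree \<Rightarrow> ltree" where
  "lambda_move N t = (\<lambda>i. if i < N then t ((i + N - 1) mod N) else t i)"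

text \<open>One generator step between (isomorphism classes of) trees.\<close>
definition bc_step :: "nat \<Rightarrow> ltree \<Rightarrow> ltree \<Rightarrow> bool" where
  "bc_step N t t' \<longleftrightarrow> is_ltree N t \<and> is_ltree N t' \<and>
     ((\<exists>k. 1 \<le> k \<and> k \<le> N - 1 \<and> ltree_iso N (u_move k t) t') \<or>
      ltree_iso N (lambda_move N t) t')"

text \<open>Same orbit under the group generated by the generators (generators act
  bijectively, so the orbit is the equivalence closure of generator steps).\<close>
definition bc_orbit_rel :: "nat \<Rightarrow> ltree \<Rightarrow> ltree \<Rightarrow> bool" where
  "bc_orbit_rel N = (symclp (bc_step N))\<^sup>*\<^sup>*"

end

theory Submission
  imports Defs "HOL-Combinatorics.Transposition"
begin

text \<open>Fix a vertex c. If some edge misses c, connectivity yields edges {c, X} and {X, Y} with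
  c \<notin> {X, Y}. Rotating the labels with \<lambda> puts {c, X} on the top label N - 1 and {X, Y}
  below it; the moves u_k then carry {X, Y} up, one label at a time, without changing which
  labels carry an edge at c, until it sits directly below {c, X}. Applying u_(N-1) twice turns
  this pair into {c, X}, {Y, c}, so the degree of c grows. Hence every tree lies in the orbit of
  a star centred at c. Two stars with the same centre are isomorphic as labelled trees, and isomorphic trees lie
  in one orbit because a generator step only determines its target up to isomorphism.\<close>

lemma bc_orbit_rel_refl: "bc_orbit_rel N t t"
  unfolding bc_orbit_rel_def by simp

lemma bc_orbit_rel_trans: "bc_orbit_rel N t s \<Longrightarrow> bc_orbit_rel N s r \<Longrightarrow> bc_orbit_rel N t r"
  unfolding bc_orbit_rel_def by (rule rtranclp_trans)

lemma bc_orbit_rel_sym: "bc_orbit_rel N t s \<Longrightarrow> bc_orbit_rel N s t"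
  unfolding bc_orbit_rel_def by (rule rtranclp_symclp_sym)

lemma bc_orbit_rel_if_bc_step: "bc_step N t s \<Longrightarrow> bc_orbit_rel N t s"
  unfolding bc_orbit_rel_def by (simp add: r_into_rtranclp symclpI)

lemma ltree_iso_refl: "ltree_iso N t t"
  unfolding ltree_iso_def by (auto intro: exI[of _ id])

lemma is_ltree_edge:
  "is_ltree N t \<Longrightarrow> k < N \<Longrightarrow> \<exists>a b. a \<noteq> b \<and> a \<le> N \<and> b \<le> N \<and> t k = {a, b}"
  unfolding is_ltree_def by blast

lemma is_ltree_vertex_le: "is_ltree N t \<Longrightarrow> k < N \<Longrightarrow> x \<in> t k \<Longrightarrow> x \<le> N"
  unfolding is_ltree_def by fastforce

lemma tree_adjI: "k < N \<Longrightarrow> t k = {x, y} \<Longrightarrow> tree_adj N t x y"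
  unfolding tree_adj_def by blast

lemma tree_adj_sym: "tree_adj N t x y \<Longrightarrow> tree_adj N t y x"
  unfolding tree_adj_def by (metis insert_commute)

lemma is_ltree_from_connectivity:
  assumes "is_ltree N t"
    and "\<And>k. k < N \<Longrightarrow> \<exists>a b. a \<noteq> b \<and> a \<le> N \<and> b \<le> N \<and> t' k = {a, b}"
    and "\<And>x y. tree_adj N t x y \<Longrightarrow> (tree_adj N t')\<^sup>*\<^sup>* x y"
  shows "is_ltree N t'"
proof -
  have "(tree_adj N t)\<^sup>*\<^sup>* \<le> (tree_adj N t')\<^sup>*\<^sup>*"
    using rtranclp_mono[of "tree_adj N t" "(tree_adj N t')\<^sup>*\<^sup>*"] assms(3) by auto
  then show ?thesis
    using assms(1,2) unfolding is_ltree_def by (meson predicate2D)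
qed

lemma is_ltree_relabel:
  assumes "is_ltree N t" and "\<sigma> ` {..<N} = {..<N}" and "\<And>k. k < N \<Longrightarrow> t' (\<sigma> k) = t k"
  shows "is_ltree N t'"
proof (rule is_ltree_from_connectivity[OF assms(1)])
  fix j assume "j < N"
  then obtain k where "k < N" "j = \<sigma> k" using assms(2) by (metis imageE lessThan_iff)
  then show "\<exists>a b. a \<noteq> b \<and> a \<le> N \<and> b \<le> N \<and> t' j = {a, b}"
    using is_ltree_edge[OF assms(1)] assms(3) by simp
next
  fix x y assume "tree_adj N t x y"
  then obtain k where "k < N" "t k = {x, y}" unfolding tree_adj_def by blast
  moreover have "\<sigma> k < N" using \<open>k < N\<close> assms(2) by blast
  ultimately show "(tree_adj N t')\<^sup>*\<^sup>* x y" using assms(3) by (metis tree_adjI r_into_rtranclp)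
qed

lemma ltree_edge_pair_cases:
  assumes "is_ltree N t" "i < N" "j < N" "t i \<noteq> t j"
  obtains (disjoint) "t i \<inter> t j = {}" | (shared) A B C where "t i = {A, B}" "t j = {A, C}" "distinct [A, B, C]"
proof (cases "t i \<inter> t j = {}")
  case False
  then obtain A where A: "A \<in> t i" "A \<in> t j" by blast
  obtain B where B: "t i = {A, B}" "B \<noteq> A"
    using is_ltree_edge[OF assms(1,2)] A(1) by (metis insertE insert_commute singletonD)
  obtain C where C: "t j = {A, C}" "C \<noteq> A"
    using is_ltree_edge[OF assms(1,3)] A(2) by (metis insertE insert_commute singletonD)
  have "B \<noteq> C" using B C assms(4) by auto
  then show ?thesis using that B C by auto
qed

lemma u_move_disjoint: "t (k - 1) \<inter> t k = {} \<Longrightarrow> u_move k t = t(k - 1 := t k, k := t (k - 1))"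
  by (simp add: u_move_def)

lemma u_move_shared:
  assumes "t (k - 1) = {A, B}" "t k = {A, C}" "distinct [A, B, C]"
  shows "u_move k t = t(k := {A, B}, k - 1 := {B, C})"
proof -
  have "{A, B} \<inter> {A, C} = {A}" "{A, B} - {A} = {B}" "{A, C} - {A} = {C}"
    using assms(3) by auto
  then show ?thesis unfolding u_move_def Let_def assms(1,2) by (simp only:) simp
qed

lemma u_move_other: "j \<noteq> k - 1 \<Longrightarrow> j \<noteq> k \<Longrightarrow> u_move k t j = t j"
  by (simp add: u_move_def Let_def)

lemma u_move_upper:
  assumes "0 < k" shows "u_move k t k = t (k - 1)"
proof -
  have "k - 1 \<noteq> k" using assms by simp
  then show ?thesis by (simp add: u_move_def Let_def)
qed

lemma u_move_lower_iff:
  assumes "is_ltree N t" "0 < k" "k < N" "t (k - 1) \<noteq> t k" "x \<notin> t (k - 1)"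
  shows "x \<in> u_move k t (k - 1) \<longleftrightarrow> x \<in> t k"
proof -
  have "k - 1 < N" "k - 1 \<noteq> k" using assms(2,3) by auto
  from ltree_edge_pair_cases[OF assms(1) this(1) assms(3,4), case_names disjoint shared] show ?thesis
  proof cases
    case disjoint
    then show ?thesis using \<open>k - 1 \<noteq> k\<close> by (simp add: u_move_disjoint)
  next
    case (shared A B C)
    then show ?thesis using assms(5) by (simp add: u_move_shared)
  qed
qed

lemma u_move_twice_shared:
  assumes "0 < k" "t (k - 1) = {A, B}" "t k = {A, C}" "distinct [A, B, C]"
  shows "u_move k (u_move k t) = t(k - 1 := {C, A}, k := {B, C})"
proof -
  let ?t = "t(k := {A, B}, k - 1 := {B, C})"
  have "k - 1 \<noteq> k" using assms(1) by simp
  then have "?t (k - 1) = {B, C}" "?t k = {B, A}" by (simp_all add: insert_commute)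
  moreover have "distinct [B, C, A]" using assms(4) by auto
  ultimately have "u_move k ?t = ?t(k := {B, C}, k - 1 := {C, A})" by (rule u_move_shared)
  then have "u_move k (u_move k t) = ?t(k := {B, C}, k - 1 := {C, A})"
    using u_move_shared[OF assms(2-4)] by simp
  also have "\<dots> = t(k - 1 := {C, A}, k := {B, C})"
    using \<open>k - 1 \<noteq> k\<close> by (auto simp: fun_eq_iff)
  finally show ?thesis .
qed

lemma is_ltree_u_move_shared:
  assumes T: "is_ltree N t" and k: "0 < k" "k < N"
    and e: "t (k - 1) = {A, B}" "t k = {A, C}" "distinct [A, B, C]"
  shows "is_ltree N (t(k := {A, B}, k - 1 := {B, C}))" (is "is_ltree N ?t")
proof (rule is_ltree_from_connectivity[OF T])
  have "k - 1 < N" "k \<noteq> k - 1" using k by auto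
  then have "?t k = {A, B}" "?t (k - 1) = {B, C}" "k - 1 < N" by auto
  then have AB: "tree_adj N ?t A B" and BC: "tree_adj N ?t B C"
    using k(2) by (auto intro: tree_adjI)
  have "A \<le> N" "B \<le> N" "C \<le> N"
    using is_ltree_vertex_le[OF T] \<open>k - 1 < N\<close> k(2) e(1,2) by auto
  then show "\<exists>a b. a \<noteq> b \<and> a \<le> N \<and> b \<le> N \<and> ?t j = {a, b}" if "j < N" for j
  proof (cases "j = k - 1 \<or> j = k")
    case True
    then have "?t j = {B, C} \<or> ?t j = {A, B}" by auto
    moreover have "A \<noteq> B" "B \<noteq> C" using e(3) by auto
    ultimately show ?thesis using \<open>A \<le> N\<close> \<open>B \<le> N\<close> \<open>C \<le> N\<close> by blast
  next
    case False
    then show ?thesis using is_ltree_edge[OF T that] by simp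
  qed
  fix x y assume "tree_adj N t x y"
  then obtain j where j: "j < N" "t j = {x, y}" unfolding tree_adj_def by blast
  show "(tree_adj N ?t)\<^sup>*\<^sup>* x y"
  proof (cases "j = k")
    case True
    have "(tree_adj N ?t)\<^sup>*\<^sup>* A C" "(tree_adj N ?t)\<^sup>*\<^sup>* C A"
      using AB BC tree_adj_sym[OF AB] tree_adj_sym[OF BC]
      by (meson converse_rtranclp_into_rtranclp r_into_rtranclp)+
    moreover have "x = A \<and> y = C \<or> x = C \<and> y = A"
      using True j(2) e(2) by (auto simp: doubleton_eq_iff)
    ultimately show ?thesis by blast
  next
    case False
    have "tree_adj N ?t x y"
    proof (cases "j = k - 1")
      case True
      then show ?thesis using \<open>?t k = {A, B}\<close> j e(1) k(2) by (metis tree_adjI)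
    next
      case False
      then show ?thesis using \<open>j \<noteq> k\<close> j by (simp add: tree_adjI)
    qed
    then show ?thesis by simp
  qed
qed

lemma is_ltree_u_move:
  assumes "is_ltree N t" "0 < k" "k < N" "t (k - 1) \<noteq> t k"
  shows "is_ltree N (u_move k t)"
proof -
  have "k - 1 < N" using assms(3) by simp
  from ltree_edge_pair_cases[OF assms(1) this assms(3,4), case_names disjoint shared] show ?thesis
  proof cases
    case disjoint
    show ?thesis
    proof (rule is_ltree_relabel[OF assms(1)])
      show "Transposition.transpose (k - 1) k ` {..<N} = {..<N}"
        using assms(3) by auto
      show "u_move k t (Transposition.transpose (k - 1) k j) = t j" for j
        using disjoint assms(2) by (simp add: u_move_disjoint transpose_def)
    qed
  next
    case (shared A B C)
    then show ?thesis using is_ltree_u_move_shared[OF assms(1-3)] by (simp add: u_move_shared)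
  qed
qed

lemma bc_orbit_rel_u_move:
  assumes "is_ltree N t" "0 < k" "k < N" "t (k - 1) \<noteq> t k"
  shows "bc_orbit_rel N t (u_move k t)"
proof (rule bc_orbit_rel_if_bc_step)
  have "1 \<le> k" "k \<le> N - 1" using assms(2,3) by simp_all
  then show "bc_step N t (u_move k t)"
    unfolding bc_step_def using assms(1) is_ltree_u_move[OF assms] ltree_iso_refl by blast
qed

lemma lambda_move_Suc_mod:
  assumes "k < N" shows "lambda_move N t (Suc k mod N) = t k"
proof (cases "Suc k < N")
  case True
  then show ?thesis by (simp add: lambda_move_def)
next
  case False
  then have "Suc k = N" using assms by simp
  then show ?thesis by (auto simp: lambda_move_def)
qed

lemma Suc_mod_image_lessThan:
  assumes "0 < N" shows "(\<lambda>k. Suc k mod N) ` {..<N} = {..<N}"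
proof
  show "(\<lambda>k. Suc k mod N) ` {..<N} \<subseteq> {..<N}" using assms by auto
  show "{..<N} \<subseteq> (\<lambda>k. Suc k mod N) ` {..<N}"
  proof
    fix j assume "j \<in> {..<N}"
    then have "j = Suc ((j + N - 1) mod N) mod N"
      using assms by (simp add: mod_Suc_eq)
    moreover have "(j + N - 1) mod N < N" using assms by simp
    ultimately show "j \<in> (\<lambda>k. Suc k mod N) ` {..<N}" by blast
  qed
qed

lemma is_ltree_lambda_move: "0 < N \<Longrightarrow> is_ltree N t \<Longrightarrow> is_ltree N (lambda_move N t)"
  by (rule is_ltree_relabel[where \<sigma> = "\<lambda>k. Suc k mod N"])
    (simp_all add: Suc_mod_image_lessThan lambda_move_Suc_mod)

lemma ltree_iso_lambda_move:
  assumes "ltree_iso N t t'"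
  shows "ltree_iso N (lambda_move N t) (lambda_move N t')"
proof -
  obtain f where "bij_betw f {0..N} {0..N}" "\<forall>k<N. t' k = f ` t k"
    using assms unfolding ltree_iso_def by blast
  moreover have "(k + N - 1) mod N < N" if "k < N" for k
    using that by simp
  ultimately show ?thesis unfolding ltree_iso_def lambda_move_def by auto
qed

lemma bc_orbit_rel_lambda_move: "0 < N \<Longrightarrow> is_ltree N t \<Longrightarrow> bc_orbit_rel N t (lambda_move N t)"
  by (intro bc_orbit_rel_if_bc_step)
    (simp add: bc_step_def is_ltree_lambda_move ltree_iso_refl)

lemma bc_orbit_rel_if_ltree_iso:
  assumes "0 < N" "is_ltree N t" "is_ltree N t'" "ltree_iso N t t'"
  shows "bc_orbit_rel N t t'"
proof -
  have "bc_step N t (lambda_move N t')"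
    using assms by (simp add: bc_step_def is_ltree_lambda_move ltree_iso_lambda_move)
  then show ?thesis
    using bc_orbit_rel_lambda_move[OF assms(1,3)]
    by (metis bc_orbit_rel_if_bc_step bc_orbit_rel_sym bc_orbit_rel_trans)
qed

definition ltree_degree :: "nat \<Rightarrow> ltree \<Rightarrow> nat \<Rightarrow> nat" where
  "ltree_degree N t c = card {k. k < N \<and> c \<in> t k}"

lemma ltree_degree_le: "ltree_degree N t c \<le> N"
  unfolding ltree_degree_def using card_mono[of "{..<N}" "{k. k < N \<and> c \<in> t k}"] by auto

lemma ltree_degree_relabel:
  assumes "\<sigma> ` {..<N} = {..<N}" and "\<And>k. k < N \<Longrightarrow> c \<in> t' (\<sigma> k) \<longleftrightarrow> c \<in> t k"
  shows "ltree_degree N t' c = ltree_degree N t c"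
proof -
  have "inj_on \<sigma> {..<N}"
    by (rule eq_card_imp_inj_on) (simp_all add: assms(1))
  moreover have "\<sigma> ` {k. k < N \<and> c \<in> t k} = {k. k < N \<and> c \<in> t' k}"
  proof (intro equalityI subsetI)
    fix j assume "j \<in> \<sigma> ` {k. k < N \<and> c \<in> t k}"
    then obtain k where "k < N" "c \<in> t k" "j = \<sigma> k" by blast
    moreover have "\<sigma> k < N" using assms(1) \<open>k < N\<close> by (metis imageI lessThan_iff)
    ultimately show "j \<in> {k. k < N \<and> c \<in> t' k}" using assms(2) by simp
  next
    fix j assume j: "j \<in> {k. k < N \<and> c \<in> t' k}"
    then have "j \<in> \<sigma> ` {..<N}" using assms(1) by simp
    then obtain k where "k < N" "j = \<sigma> k" by blast
    then show "j \<in> \<sigma> ` {k. k < N \<and> c \<in> t k}" using assms(2) j by simp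
  qed
  ultimately have "bij_betw \<sigma> {k. k < N \<and> c \<in> t k} {k. k < N \<and> c \<in> t' k}"
    unfolding bij_betw_def by (blast intro: inj_on_subset)
  then show ?thesis unfolding ltree_degree_def by (simp add: bij_betw_same_card)
qed

lemma ltree_degree_lambda_move: "0 < N \<Longrightarrow> ltree_degree N (lambda_move N t) c = ltree_degree N t c"
  by (rule ltree_degree_relabel[where \<sigma> = "\<lambda>k. Suc k mod N"])
    (simp_all add: Suc_mod_image_lessThan lambda_move_Suc_mod)

lemma ltree_degree_u_move:
  assumes "is_ltree N t" "0 < k" "k < N" "t (k - 1) \<noteq> t k" "c \<notin> t (k - 1)"
  shows "ltree_degree N (u_move k t) c = ltree_degree N t c"
proof (rule ltree_degree_relabel[where \<sigma> = "Transposition.transpose (k - 1) k"])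
  show "Transposition.transpose (k - 1) k ` {..<N} = {..<N}"
    using assms(3) by auto
  show "c \<in> u_move k t (Transposition.transpose (k - 1) k j) \<longleftrightarrow> c \<in> t j" for j
    using u_move_upper[OF assms(2)] u_move_lower_iff[OF assms] u_move_other[of j k t] assms(5)
    by (auto simp: transpose_def)
qed

lemma ltree_two_edge_path:
  assumes T: "is_ltree N t" and "c \<le> N" "k0 < N" "c \<notin> t k0"
  obtains p q X Y where "p < N" "q < N" "t p = {X, Y}" "t q = {c, X}" "c \<notin> {X, Y}"
proof -
  have "\<exists>p q X Y. p < N \<and> q < N \<and> t p = {X, Y} \<and> t q = {c, X} \<and> c \<notin> {X, Y}"
  proof (rule ccontr)
    assume no_path: "\<not> ?thesis"
    define S where "S = insert c {x. \<exists>k<N. t k = {c, x}}"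
    \<comment> \<open>without such a path, c and its neighbours form a union of components\<close>
    have closed: "y \<in> S" if adj: "tree_adj N t x y" and x: "x \<in> S" for x y
    proof -
      obtain j where j: "j < N" "t j = {x, y}" using adj unfolding tree_adj_def by blast
      show ?thesis
      proof (cases "x = c \<or> y = c")
        case True
        then show ?thesis using j unfolding S_def by (auto simp: insert_commute)
      next
        case False
        then obtain k where "k < N" "t k = {c, x}" using x unfolding S_def by blast
        then show ?thesis using no_path j False by blast
      qed
    qed
    have "c \<in> S" unfolding S_def by simp
    have "(tree_adj N t)\<^sup>*\<^sup>* c y \<Longrightarrow> y \<in> S" for y
      by (induction rule: rtranclp_induct) (use \<open>c \<in> S\<close> closed in blast)+
    moreover obtain a b where ab: "a \<le> N" "t k0 = {a, b}"
      using is_ltree_edge[OF T \<open>k0 < N\<close>] by blast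
    ultimately have "a \<in> S" using T \<open>c \<le> N\<close> unfolding is_ltree_def by blast
    moreover have "a \<noteq> c" "c \<notin> {a, b}" using ab(2) \<open>c \<notin> t k0\<close> by auto
    ultimately show False using no_path \<open>k0 < N\<close> ab(2) unfolding S_def by blast
  qed
  then show ?thesis using that by blast
qed

lemma rotate_label_to_top:
  assumes "is_ltree N t" "p < N" "q < N" "p \<noteq> q"
  shows "\<exists>s p'. bc_orbit_rel N t s \<and> is_ltree N s \<and> ltree_degree N s c = ltree_degree N t c
    \<and> s (N - 1) = t q \<and> p' < N - 1 \<and> s p' = t p"
proof -
  have "q \<le> N - 1" using assms(3) by simp
  then show ?thesis using assms(1,2,4)
  proof (induction q arbitrary: t p rule: inc_induct)
    case base
    then show ?case using bc_orbit_rel_refl by (intro exI[of _ t] exI[of _ p]) auto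
  next
    case (step q)
    let ?t = "lambda_move N t" and ?p = "Suc p mod N"
    have N: "0 < N" "Suc q < N" using step.hyps by auto
    have "?t (Suc q) = t q" using lambda_move_Suc_mod[of q N t] N by simp
    moreover have "?t ?p = t p" "?p < N" using lambda_move_Suc_mod step.prems(2) N(1) by auto
    moreover have "?p \<noteq> Suc q" using step.prems(2,3) N by (cases "Suc p = N") auto
    moreover have "is_ltree N ?t" "bc_orbit_rel N t ?t" "ltree_degree N ?t c = ltree_degree N t c"
      using is_ltree_lambda_move bc_orbit_rel_lambda_move ltree_degree_lambda_move N(1) step.prems(1)
      by auto
    ultimately show ?case using step.IH[of ?t ?p] by (metis bc_orbit_rel_trans)
  qed
qed

lemma move_edge_up:
  assumes "is_ltree N t" "p < q" "q < N" "t p = {X, Y}" "c \<notin> {X, Y}"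
  shows "\<exists>s. bc_orbit_rel N t s \<and> is_ltree N s \<and> ltree_degree N s c = ltree_degree N t c
    \<and> s (q - 1) = {X, Y} \<and> s q = t q"
proof -
  have "p \<le> q - 1" using assms(2) by simp
  then show ?thesis using assms(1,4)
  proof (induction p arbitrary: t rule: inc_induct)
    case base
    then show ?case using bc_orbit_rel_refl by blast
  next
    case (step p)
    show ?case
    proof (cases "t (Suc p) = {X, Y}")
      case True
      \<comment> \<open>parallel edges cannot occur in a tree, but skipping them is cheaper than proving that\<close>
      then show ?thesis using step.IH step.prems(1) by blast
    next
      case False
      let ?t = "u_move (Suc p) t"
      have k: "0 < Suc p" "Suc p < N" and ne: "t (Suc p - 1) \<noteq> t (Suc p)"
        using step.hyps assms(3) False step.prems(2) by auto
      have "ltree_degree N ?t c = ltree_degree N t c"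
        using ltree_degree_u_move[OF step.prems(1) k ne] step.prems(2) assms(5) by simp
      moreover have "?t (Suc p) = {X, Y}" "?t q = t q"
        using u_move_upper[of "Suc p" t] u_move_other[of q "Suc p" t] step.prems(2) step.hyps by auto
      moreover have "is_ltree N ?t" "bc_orbit_rel N t ?t"
        using is_ltree_u_move[OF step.prems(1) k ne] bc_orbit_rel_u_move[OF step.prems(1) k ne] .
      ultimately show ?thesis using step.IH[of ?t] by (metis bc_orbit_rel_trans)
    qed
  qed
qed

lemma join_two_edge_path:
  assumes T: "is_ltree N t" and k: "0 < k" "k < N"
    and e: "t (k - 1) = {X, Y}" "t k = {c, X}" "c \<notin> {X, Y}"
  shows "\<exists>s. bc_orbit_rel N t s \<and> is_ltree N s \<and> ltree_degree N t c < ltree_degree N s c"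
proof -
  have "k - 1 < N" using k by simp
  then obtain a b where "a \<noteq> b" "t (k - 1) = {a, b}" using is_ltree_edge[OF T] by blast
  then have "X \<noteq> Y" using e(1) by (auto simp: doubleton_eq_iff)
  then have shape: "t (k - 1) = {X, Y}" "t k = {X, c}" "distinct [X, Y, c]"
    using e by (auto simp: insert_commute)
  let ?t1 = "u_move k t" and ?t2 = "u_move k (u_move k t)"
  have "k - 1 \<noteq> k" using k by simp
  have t1: "?t1 = t(k := {X, Y}, k - 1 := {Y, c})" using u_move_shared[OF shape] .
  have "t (k - 1) \<noteq> t k" using e by auto
  then have T1: "is_ltree N ?t1" "bc_orbit_rel N t ?t1"
    using is_ltree_u_move[OF T k] bc_orbit_rel_u_move[OF T k] by simp_all
  have "?t1 (k - 1) \<noteq> ?t1 k" unfolding t1 using \<open>k - 1 \<noteq> k\<close> e(3) by auto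
  then have T2: "is_ltree N ?t2" "bc_orbit_rel N ?t1 ?t2"
    using is_ltree_u_move[OF T1(1) k] bc_orbit_rel_u_move[OF T1(1) k] by simp_all
  have t2: "?t2 = t(k - 1 := {c, X}, k := {Y, c})"
    using u_move_twice_shared[OF k(1) shape] .
  have "{j. j < N \<and> c \<in> t j} \<subseteq> {j. j < N \<and> c \<in> ?t2 j}"
    unfolding t2 by auto
  moreover have "k - 1 < N" "c \<in> ?t2 (k - 1)" "c \<notin> t (k - 1)"
    unfolding t2 using k e(1,3) by simp_all
  ultimately have "{j. j < N \<and> c \<in> t j} \<subset> {j. j < N \<and> c \<in> ?t2 j}" by blast
  then have "ltree_degree N t c < ltree_degree N ?t2 c"
    unfolding ltree_degree_def by (simp add: psubset_card_mono)
  then show ?thesis using T1 T2 bc_orbit_rel_trans by blast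
qed

lemma ltree_degree_increase:
  assumes T: "is_ltree N t" and "c \<le> N" "k0 < N" "c \<notin> t k0"
  shows "\<exists>s. bc_orbit_rel N t s \<and> is_ltree N s \<and> ltree_degree N t c < ltree_degree N s c"
proof -
  obtain p q X Y where pq: "p < N" "q < N" "t p = {X, Y}" "t q = {c, X}" "c \<notin> {X, Y}"
    using ltree_two_edge_path[OF assms] .
  have "p \<noteq> q" using pq(3-5) by auto
  then obtain s p' where s: "bc_orbit_rel N t s" "is_ltree N s"
      "ltree_degree N s c = ltree_degree N t c" "s (N - 1) = {c, X}" "p' < N - 1" "s p' = {X, Y}"
    using rotate_label_to_top[OF T pq(1,2), of c] pq(3,4) by metis
  then obtain s1 where s1: "bc_orbit_rel N s s1" "is_ltree N s1"
      "ltree_degree N s1 c = ltree_degree N s c" "s1 (N - 1 - 1) = {X, Y}" "s1 (N - 1) = {c, X}"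
    using move_edge_up[OF s(2) s(5) _ s(6) pq(5)] pq(1) by auto
  obtain s2 where "bc_orbit_rel N s1 s2" "is_ltree N s2" "ltree_degree N s1 c < ltree_degree N s2 c"
    using join_two_edge_path[OF s1(2) _ _ s1(4,5) pq(5)] s(5) by auto
  then show ?thesis using s s1 by (metis bc_orbit_rel_trans)
qed

lemma bc_orbit_rel_star:
  assumes "is_ltree N t" "c \<le> N"
  shows "\<exists>s. bc_orbit_rel N t s \<and> is_ltree N s \<and> (\<forall>k<N. c \<in> s k)"
  using assms(1)
proof (induction "N - ltree_degree N t c" arbitrary: t rule: less_induct)
  case less
  show ?case
  proof (cases "\<forall>k<N. c \<in> t k")
    case True
    then show ?thesis using less.prems bc_orbit_rel_refl by blast
  next
    case False
    then obtain k0 where "k0 < N" "c \<notin> t k0" by blast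
    then obtain s where s: "bc_orbit_rel N t s" "is_ltree N s"
        "ltree_degree N t c < ltree_degree N s c"
      using ltree_degree_increase[OF less.prems assms(2)] by blast
    moreover have "N - ltree_degree N s c < N - ltree_degree N t c"
      using ltree_degree_le[of N s c] s(3) by linarith
    ultimately show ?thesis using less.hyps[of s] bc_orbit_rel_trans by blast
  qed
qed

lemma ltree_star_leaves:
  assumes T: "is_ltree N s" and "c \<le> N" and star: "\<forall>k<N. c \<in> s k"
  obtains v where "\<forall>k<N. s k = {c, v k}" "bij_betw v {..<N} ({0..N} - {c})"
proof -
  have "\<exists>w. s k = {c, w} \<and> w \<in> {0..N} - {c}" if k: "k < N" for k
  proof -
    obtain a b where "a \<noteq> b" "a \<le> N" "b \<le> N" "s k = {a, b}"
      using is_ltree_edge[OF T k] by blast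
    then show ?thesis using star k by (cases "c = a") (auto simp: insert_commute)
  qed
  then obtain v where v: "\<And>k. k < N \<Longrightarrow> s k = {c, v k} \<and> v k \<in> {0..N} - {c}" by metis
  have "v ` {..<N} = {0..N} - {c}"
  proof
    show "v ` {..<N} \<subseteq> {0..N} - {c}" using v by auto
    show "{0..N} - {c} \<subseteq> v ` {..<N}"
    proof
      fix y assume y: "y \<in> {0..N} - {c}"
      then have "(tree_adj N s)\<^sup>*\<^sup>* c y" using T \<open>c \<le> N\<close> unfolding is_ltree_def by simp
      then obtain x where "tree_adj N s x y" using y by (metis DiffD2 rtranclp.cases singletonI)
      then obtain j where "j < N" "s j = {x, y}" unfolding tree_adj_def by blast
      then have "y = v j" using v[of j] y by (auto simp: doubleton_eq_iff)
      then show "y \<in> v ` {..<N}" using \<open>j < N\<close> by blast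
    qed
  qed
  moreover have "card ({0..N} - {c}) = card {..<N}" using \<open>c \<le> N\<close> by simp
  ultimately have "bij_betw v {..<N} ({0..N} - {c})"
    unfolding bij_betw_def by (metis eq_card_imp_inj_on finite_lessThan)
  then show ?thesis using that v by blast
qed

lemma ltree_iso_stars:
  assumes "is_ltree N s" "is_ltree N s'" "c \<le> N" "\<forall>k<N. c \<in> s k" "\<forall>k<N. c \<in> s' k"
  shows "ltree_iso N s s'"
proof -
  obtain v where v: "\<forall>k<N. s k = {c, v k}" "bij_betw v {..<N} ({0..N} - {c})"
    using ltree_star_leaves[OF assms(1,3,4)] by blast
  obtain w where w: "\<forall>k<N. s' k = {c, w k}" "bij_betw w {..<N} ({0..N} - {c})"
    using ltree_star_leaves[OF assms(2,3,5)] by blast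
  define f where "f x = (if x = c then c else w (inv_into {..<N} v x))" for x
  have "bij_betw (w \<circ> inv_into {..<N} v) ({0..N} - {c}) ({0..N} - {c})"
    using bij_betw_trans[OF bij_betw_inv_into[OF v(2)] w(2)] .
  then have "bij_betw f ({0..N} - {c}) ({0..N} - {c})"
    by (rule bij_betw_cong[THEN iffD1, rotated]) (simp add: f_def)
  moreover have "bij_betw f {c} {c}" by (simp add: f_def)
  ultimately have "bij_betw f (({0..N} - {c}) \<union> {c}) (({0..N} - {c}) \<union> {c})"
    by (rule bij_betw_combine) simp
  moreover have "({0..N} - {c}) \<union> {c} = {0..N}" using assms(3) by auto
  moreover have "s' k = f ` s k" if "k < N" for k
  proof -
    have "v k \<noteq> c" "inv_into {..<N} v (v k) = k"
      using v(2) that by (auto simp: bij_betw_def)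
    then show ?thesis using v(1) w(1) that by (simp add: f_def insert_commute)
  qed
  ultimately show ?thesis unfolding ltree_iso_def by auto
qed

theorem mainTheorem11:
  fixes N :: nat and t t' :: ltree
  assumes "N \<ge> 2" and "is_ltree N t" and "is_ltree N t'"
  shows "bc_orbit_rel N t t'"
proof -
  obtain s where s: "bc_orbit_rel N t s" "is_ltree N s" "\<forall>k<N. 0 \<in> s k"
    using bc_orbit_rel_star[OF assms(2), of 0] by blast
  obtain s' where s': "bc_orbit_rel N t' s'" "is_ltree N s'" "\<forall>k<N. 0 \<in> s' k"
    using bc_orbit_rel_star[OF assms(3), of 0] by blast
  have "bc_orbit_rel N s s'"
    using assms(1) s s' by (intro bc_orbit_rel_if_ltree_iso ltree_iso_stars) auto
  then show ?thesis using s(1) s'(1) by (metis bc_orbit_rel_sym bc_orbit_rel_trans)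
qed

end
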